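(* Let $(H_i)_{i=0}^\infty = (2^{\alpha_i}3^{\beta_i})_{i=0}^\infty$ be the increasing enumeration of $\mathcal{H}=\{2^\alpha3^\beta : \alpha,\beta\in\mathbb{N}_0\}$, and define $f\colon\mathbb{N}_0\to\{+1,-1\}$ by $f(0)=+1$ and $f(n)=(-1)^{\alpha_i+\beta_i}$ for $n\in\{H_i,H_i+1,\dots,H_{i+1}-1\}$, $i\in\mathbb{N}_0$. Then there is no periodic sequence $\tilde f\colon\mathbb{N}_0\to\{+1,-1\}$ such that $f(n)=\tilde f(n)$ for almost all $n\in\mathbb{N}_0$.
   Context: $\mathbb{N}_0=\{0,1,2,\dots\}$. A property holds for almost all $n\in\mathbb{N}_0$ if the set of $n$ where it fails has upper density $\limsup_{N\to\infty}|\cdot\cap\{0,\dots,N-1\}|/N$ equal to $0$. *)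

theory Defs
  imports "HOL-Analysis.Analysis" "HOL-Computational_Algebra.Primes"
begin

definition hamming23 :: "nat set" where
  "hamming23 = {2 ^ a * 3 ^ b | a b. True}"

definition H :: "nat \<Rightarrow> nat" where
  "H i = enumerate hamming23 i"

definition alphaH :: "nat \<Rightarrow> nat" where
  "alphaH i = multiplicity (2::nat) (H i)"

definition betaH :: "nat \<Rightarrow> nat" where
  "betaH i = multiplicity (3::nat) (H i)"

definition f :: "nat \<Rightarrow> int" where
  "f n = (if n = 0 then 1
          else (-1) ^ (alphaH (THE i. H i \<le> n \<and> n < H (Suc i)) +
                       betaH (THE i. H i \<le> n \<and> n < H (Suc i))))"

definition upper_density :: "nat set \<Rightarrow> ereal" where
  "upper_density A = limsup (\<lambda>N. ereal (real (card (A \<inter> {0..<N})) / real N))"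

definition periodic_seq :: "(nat \<Rightarrow> 'a) \<Rightarrow> bool" where
  "periodic_seq g \<longleftrightarrow> (\<exists>p>0. \<forall>n. g (n + p) = g n)"

end

theory Submission
  imports Defs
begin

(* Let h be the largest element of hamming23 not exceeding n, so that f n = (-1)^(a+b) for
   h = 2^a 3^b. If 3^c \<le> n and 2n < 3^(c+1), every power of 3 up to 2n is at most 3^c \<le> h,
   and every even element of hamming23 up to 2n is twice one up to n; hence the largest element up
   to 2n is 2h and f (2n) = - f n.
   A p-periodic g takes the same value at n and 2n whenever p divides n, so g differs from f at n or
   at 2n. Taking n among the roughly 3^c/(4p) multiples of p in (3^c, 5/4 3^c] shows that g and f
   differ on at least 3^c/(8p) - 1 integers below 3^(c+1), so the set where they differ has upper
   density at least 1/(24p). The values of g play no role. *)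

lemma infinite_hamming23: "infinite hamming23"
proof -
  have "range (\<lambda>a. 2 ^ a * 3 ^ 0) \<subseteq> hamming23"
    unfolding hamming23_def by blast
  moreover have "infinite (range (\<lambda>a. 2 ^ a * 3 ^ 0 :: nat))"
    by (rule range_inj_infinite) (simp add: inj_on_def)
  ultimately show ?thesis
    by (rule infinite_super)
qed

lemma strict_mono_H: "strict_mono H"
  unfolding H_def[abs_def] using strict_mono_enumerate[OF infinite_hamming23] .

lemma range_H: "range H = hamming23"
  unfolding H_def[abs_def] using range_enumerate[OF infinite_hamming23] .

lemma zero_not_in_hamming23: "0 \<notin> hamming23"
  unfolding hamming23_def by auto

lemma double_in_hamming23:
  assumes "x \<in> hamming23"
  shows "2 * x \<in> hamming23"
proof -
  obtain a b where "x = 2 ^ a * 3 ^ b"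
    using assms unfolding hamming23_def by auto
  then have "2 * x = 2 ^ Suc a * 3 ^ b"
    by simp
  then show ?thesis
    unfolding hamming23_def by blast
qed

lemma the_strict_mono_interval:
  fixes h :: "nat \<Rightarrow> 'a::linorder"
  assumes "strict_mono h" "h i \<le> x" "x < h (Suc i)"
  shows "(THE j. h j \<le> x \<and> x < h (Suc j)) = i"
proof (rule the_equality)
  fix j
  assume "h j \<le> x \<and> x < h (Suc j)"
  with assms have "h j < h (Suc i)" "h i < h (Suc j)"
    by auto
  then show "j = i"
    using strict_mono_less[OF assms(1)] by (metis less_Suc_eq_le order_antisym)
qed (use assms in simp)

definition hamming_floor :: "nat \<Rightarrow> nat" where
  "hamming_floor n = Max {x \<in> hamming23. x \<le> n}"

lemma
  assumes "1 \<le> n"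
  shows hamming_floor_in_hamming23: "hamming_floor n \<in> hamming23"
    and hamming_floor_le: "hamming_floor n \<le> n"
proof -
  have "finite {x \<in> hamming23. x \<le> n}"
    by (rule finite_subset[of _ "{..n}"]) auto
  moreover have "1 \<in> {x \<in> hamming23. x \<le> n}"
    using assms unfolding hamming23_def by (auto intro: exI[of _ 0])
  ultimately have "hamming_floor n \<in> {x \<in> hamming23. x \<le> n}"
    unfolding hamming_floor_def by (intro Max_in) auto
  then show "hamming_floor n \<in> hamming23" "hamming_floor n \<le> n"
    by auto
qed

lemma hamming_floor_eqI:
  assumes "h \<in> hamming23" "h \<le> n" "\<And>x. x \<in> hamming23 \<Longrightarrow> x \<le> n \<Longrightarrow> x \<le> h"
  shows "hamming_floor n = h"
  unfolding hamming_floor_def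
  by (rule Max_eqI) (use assms in \<open>auto intro: finite_subset[of _ "{..n}"]\<close>)

lemma le_hamming_floor:
  assumes "x \<in> hamming23" "x \<le> n"
  shows "x \<le> hamming_floor n"
  unfolding hamming_floor_def
  by (rule Max_ge) (use assms in \<open>auto intro: finite_subset[of _ "{..n}"]\<close>)

lemma f_eq_hamming_floor:
  assumes "1 \<le> n"
  shows "f n = (-1) ^ (multiplicity 2 (hamming_floor n) + multiplicity 3 (hamming_floor n))"
proof -
  obtain i where i: "H i = hamming_floor n"
    using hamming_floor_in_hamming23[OF assms] range_H by (metis imageE)
  have "n < H (Suc i)"
  proof (rule ccontr)
    assume "\<not> n < H (Suc i)"
    then have "H (Suc i) \<le> H i"
      using i le_hamming_floor range_H by (metis not_less rangeI)
    with strict_mono_H show False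
      by (simp add: strict_mono_less_eq)
  qed
  then have "(THE j. H j \<le> n \<and> n < H (Suc j)) = i"
    using the_strict_mono_interval[OF strict_mono_H] i hamming_floor_le[OF assms] by simp
  with assms i show ?thesis
    unfolding f_def alphaH_def betaH_def by simp
qed

lemma hamming_floor_double:
  assumes "3 ^ c \<le> n" "2 * n < 3 ^ Suc c"
  shows "hamming_floor (2 * n) = 2 * hamming_floor n"
proof (rule hamming_floor_eqI)
  have "1 \<le> n"
    using assms(1) one_le_power[of "3::nat" c] by linarith
  note floor_n = hamming_floor_in_hamming23[OF this] hamming_floor_le[OF this]
  then show "2 * hamming_floor n \<in> hamming23"
    by (intro double_in_hamming23)
  show "2 * hamming_floor n \<le> 2 * n"
    using floor_n by simp
  fix x
  assume "x \<in> hamming23" "x \<le> 2 * n"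
  then obtain a b where x: "x = 2 ^ a * 3 ^ b"
    unfolding hamming23_def by auto
  show "x \<le> 2 * hamming_floor n"
  proof (cases a)
    case 0
    then have "(3::nat) ^ b < 3 ^ Suc c"
      using x \<open>x \<le> 2 * n\<close> assms(2) by simp
    then have "(3::nat) ^ b \<le> 3 ^ c"
      by (simp only: power_strict_increasing_iff power_increasing_iff)
    moreover have "3 ^ c \<le> hamming_floor n"
      using assms(1) by (intro le_hamming_floor) (auto simp: hamming23_def intro: exI[of _ 0])
    moreover have "x = 3 ^ b"
      using x 0 by simp
    ultimately show ?thesis
      by linarith
  next
    case (Suc a')
    have "2 ^ a' * 3 ^ b \<le> hamming_floor n"
      using x Suc \<open>x \<le> 2 * n\<close> by (intro le_hamming_floor) (auto simp: hamming23_def)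
    then show ?thesis
      using x Suc by simp
  qed
qed

lemma f_double:
  assumes "3 ^ c \<le> n" "2 * n < 3 ^ Suc c"
  shows "f (2 * n) = - f n"
proof -
  have "1 \<le> n"
    using assms(1) one_le_power[of "3::nat" c] by linarith
  then have "hamming_floor n \<noteq> 0"
    using hamming_floor_in_hamming23 zero_not_in_hamming23 by metis
  moreover have "multiplicity 3 (2 * m) = multiplicity 3 m" for m :: nat
    by (rule multiplicity_prime_elem_times_other) auto
  ultimately show ?thesis
    using \<open>1 \<le> n\<close> f_eq_hamming_floor[of n] f_eq_hamming_floor[of "2 * n"]
    by (simp add: hamming_floor_double[OF assms] multiplicity_times_same)
qed

lemma f_nonzero: "f n \<noteq> 0"
  unfolding f_def by simp

lemma periodic_multiple:
  fixes g :: "nat \<Rightarrow> 'a"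
  assumes "\<And>n. g (n + p) = g n"
  shows "g (k * p) = g 0"
proof (induction k)
  case (Suc k)
  then show ?case
    using assms[of "k * p"] by (simp add: add.commute)
qed simp

lemma disagreement_lower_bound:
  fixes f g :: "nat \<Rightarrow> 'a"
  assumes "p > 0" and periodic: "\<And>n. g (n + p) = g n"
    and flip: "\<And>n. K \<le> n \<Longrightarrow> 2 * n < 3 * K \<Longrightarrow> f (2 * n) \<noteq> f n"
  shows "K < 4 * p * (2 * card ({n. f n \<noteq> g n} \<inter> {..<3 * K}) + 1)"
proof -
  define E where "E = {n. f n \<noteq> g n} \<inter> {..<3 * K}"
  define q where "q = K div p"
  define L where "L = K div (4 * p)"
  define A where "A = (\<lambda>j. j * p) ` {q + 1..q + L}"
  have "p * q + K mod p = K" "4 * p * L + K mod (4 * p) = K"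
    unfolding q_def L_def by (simp_all only: mult_div_mod_eq)
  moreover have "K mod p < p" "K mod (4 * p) < 4 * p"
    using \<open>p > 0\<close> by simp_all
  ultimately have K_bounds: "p * q \<le> K" "K < p * (q + 1)" "4 * p * L \<le> K" "K < 4 * p * (L + 1)"
    by (simp_all only: distrib_left mult_1_right)
  have "A \<subseteq> E \<union> (\<lambda>m. m div 2) ` E"
  proof
    fix n
    assume "n \<in> A"
    then obtain j where j: "n = j * p" "q + 1 \<le> j" "j \<le> q + L"
      unfolding A_def by fastforce
    have "p * (q + 1) \<le> p * j" "p * j \<le> p * (q + L)"
      using j(2,3) by (simp_all only: mult_le_mono2)
    then have "K \<le> n" "2 * n < 3 * K"
      using K_bounds j(1) by (simp_all add: algebra_simps)
    moreover have "g (2 * n) = g n"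
      using periodic_multiple[of g p] periodic j(1) by (metis mult.assoc)
    ultimately have "n \<in> E \<or> 2 * n \<in> E"
      using flip unfolding E_def by fastforce
    then show "n \<in> E \<union> (\<lambda>m. m div 2) ` E"
      by (auto intro: image_eqI[of n _ "2 * n"])
  qed
  then have "card A \<le> card (E \<union> (\<lambda>m. m div 2) ` E)"
    by (intro card_mono) (simp_all add: E_def)
  also have "\<dots> \<le> card E + card ((\<lambda>m. m div 2) ` E)"
    by (rule card_Un_le)
  also have "\<dots> \<le> 2 * card E"
    using card_image_le[of E "\<lambda>m. m div 2"] unfolding E_def by simp
  finally have "L \<le> 2 * card E"
    using \<open>p > 0\<close> unfolding A_def by (simp add: card_image inj_on_def)
  then have "4 * p * (L + 1) \<le> 4 * p * (2 * card E + 1)"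
    by simp
  with K_bounds(4) show ?thesis
    unfolding E_def by linarith
qed

lemma upper_density_zeroD:
  assumes "upper_density A = 0" "\<epsilon> > 0"
  shows "\<forall>\<^sub>F N in sequentially. real (card (A \<inter> {..<N})) < \<epsilon> * real N"
proof -
  have "\<forall>\<^sub>F N in sequentially. ereal (real (card (A \<inter> {0..<N})) / real N) < ereal \<epsilon>"
    using assms unfolding upper_density_def by (intro Limsup_lessD) simp
  with eventually_gt_at_top[of 0] show ?thesis
    by eventually_elim (simp add: divide_less_eq atLeast0LessThan)
qed

theorem proposition4p4:
  shows "\<not> (\<exists>g :: nat \<Rightarrow> int. (\<forall>n. g n \<in> {1, -1}) \<and> periodic_seq g \<and>
             upper_density {n. f n \<noteq> g n} = 0)"
proof
  assume "\<exists>g :: nat \<Rightarrow> int. (\<forall>n. g n \<in> {1, -1}) \<and> periodic_seq g \<and>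
             upper_density {n. f n \<noteq> g n} = 0"
  then obtain g :: "nat \<Rightarrow> int" and p where "p > 0" and periodic: "\<And>n. g (n + p) = g n"
    and density: "upper_density {n. f n \<noteq> g n} = 0"
    unfolding periodic_seq_def by blast
  define e where "e N = card ({n. f n \<noteq> g n} \<inter> {..<N})" for N
  obtain N0 where N0: "\<And>N. N0 \<le> N \<Longrightarrow> real (e N) < real N / (48 * p)"
    using upper_density_zeroD[OF density, of "1 / (48 * p)"] \<open>p > 0\<close>
    unfolding e_def eventually_sequentially by auto
  define K :: nat where "K = 3 ^ (N0 + 8 * p)"
  have "N0 + 8 * p < K"
    unfolding K_def by (simp add: power_gt_expt)
  have "real K < real (4 * p * (2 * e (3 * K) + 1))"
    unfolding e_def of_nat_less_iff
  proof (rule disagreement_lower_bound[where g = g, OF \<open>p > 0\<close> periodic])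
    fix n
    assume "K \<le> n" "2 * n < 3 * K"
    then have "f (2 * n) = - f n"
      unfolding K_def by (intro f_double) simp_all
    then show "f (2 * n) \<noteq> f n"
      using f_nonzero[of n] by simp
  qed
  moreover have "8 * p * real (e (3 * K)) < real K / 2"
    using N0[of "3 * K"] \<open>N0 + 8 * p < K\<close> \<open>p > 0\<close> by (simp add: field_simps)
  ultimately have "real K < real K / 2 + 4 * p"
    by (simp add: algebra_simps)
  with \<open>N0 + 8 * p < K\<close> show False
    by linarith
qed

end
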